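(* Let $n$ be a positive integer, $k\ge 2$ an integer, and $\beta,\alpha_0,\alpha_1,\dots,\alpha_{n-1}$ non-negative integers with $0\le\beta\le k-1$. Then $$\det_{0\le i,j\le n-1}\bigl(C_{(k-1)\alpha_i+j+\beta,k}\bigr)=\prod_{0\le i<j\le n-1}(\alpha_j-\alpha_i)\prod_{i=0}^{n-1}\frac{((k-1)i+\beta+n)!\,(k\alpha_i+\beta)!}{(ki+\beta)!\,\alpha_i!\,((k-1)\alpha_i+\beta+n)!}.$$
   Context: For integers $k\ge2$ and $m\ge0$, the generalised Catalan number is $$C_{m,k}=\frac{m-(k-1)\lfloor\frac{m}{k-1}\rfloor+1}{m+\lfloor\frac{m}{k-1}\rfloor+1}\binom{m+\lfloor\frac{m}{k-1}\rfloor+1}{m+1}.$$ (Equivalently, $C_{m,k}$ is the number of lattice paths with unit steps $(1,0)$ and $(0,1)$ from $(0,0)$ to $(m,\lfloor m/(k-1)\rfloor)$ never passing above the line $x=(k-1)y$.) *)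

theory Defs
  imports Main "Jordan_Normal_Form.Determinant"
begin

definition gen_catalan :: "nat \<Rightarrow> nat \<Rightarrow> rat" where
  "gen_catalan m k =
     (let q = m div (k - 1) in
      of_nat (m - (k - 1) * q + 1) / of_nat (m + q + 1) * of_nat ((m + q + 1) choose (m + 1)))"

end

theory Submission
  imports Defs "HOL-Computational_Algebra.Polynomial"
begin

(* With ballot k x y = (x + 1 - (k - 1) y) (x + y)! / (y! (x + 1)!), the number of lattice paths
   to (x, y) never above the line x = (k - 1) y, one has C_{m,k} = ballot k m (floor (m / (k - 1))).
   Summing over the last step of the paths, ballot k x (a + d) - ballot k x a is, for
   x = (k - 1) a + c and (k - 1) d <= c, a combination with coefficients independent of a of the
   diagonal numbers ballot k ((k - 1) a + s) a, k - 1 <= s < c.  These are column operations, so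
   the matrix may be replaced by (ballot k ((k - 1) alpha_i + beta + j) alpha_i).  Its entries
   factor as g(alpha_i) (beta + j + 1) prod_{t=1}^{j} (k alpha_i + beta + t)
   prod_{t=j+1}^{n-1} ((k - 1) alpha_i + beta + t + 1), and Krattenthaler's determinant lemma gives
   the Vandermonde product times constants that telescope into factorials. *)

lemma sum_lessThan_add:
  fixes m n :: nat
  shows "(\<Sum>s<m + n. f s) = (\<Sum>s<m. f s) + (\<Sum>s<n. f (m + s))"
  by (induction n) (simp_all add: add.assoc)

lemma prod_atLeast1_atMost_Suc: "(\<Prod>t\<in>{1..Suc j}. g t) = g 1 * (\<Prod>t\<in>{1..j}. g (Suc t))"
  by (simp add: prod.atLeast_Suc_atMost prod.shift_bounds_cl_Suc_ivl del: prod.cl_ivl_Suc)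

lemma prod_upper_pairs_lessThan_Suc:
  "(\<Prod>i<Suc n. \<Prod>j\<in>{i<..<Suc n}. f i j) =
     (\<Prod>j\<in>{1..n}. f 0 j) * (\<Prod>i<n. \<Prod>j\<in>{i<..<n}. f (Suc i) (Suc j))"
proof -
  have "{0<..<Suc n} = {1..n}" by auto
  moreover have "(\<Prod>j\<in>{Suc i<..<Suc n}. g j) = (\<Prod>j\<in>{i<..<n}. g (Suc j))" for i and g :: "nat \<Rightarrow> 'a"
  proof -
    have "{Suc i<..<Suc n} = {Suc (Suc i)..<Suc n}" "{i<..<n} = {Suc i..<n}" by auto
    then show ?thesis by (simp only: prod.shift_bounds_Suc_ivl)
  qed
  ultimately show ?thesis unfolding prod.lessThan_Suc_shift by simp
qed

lemma prod_lessThan_triangle_swap: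
  fixes n :: nat
  shows "(\<Prod>s<n. \<Prod>t<n - s. f s t) = (\<Prod>t<n. \<Prod>s<n - t. f s t :: 'a::comm_monoid_mult)"
proof -
  have "(\<Prod>s<n. \<Prod>t<n - s. f s t) = (\<Prod>(s, t)\<in>(SIGMA s:{..<n}. {..<n - s}). f s t)"
    by (rule prod.Sigma) auto
  also have "\<dots> = (\<Prod>(t, s)\<in>(SIGMA t:{..<n}. {..<n - t}). f s t)"
    by (rule prod.reindex_bij_witness[where i = "\<lambda>(t, s). (s, t)" and j = "\<lambda>(s, t). (t, s)"]) auto
  also have "\<dots> = (\<Prod>t<n. \<Prod>s<n - t. f s t)"
    by (rule prod.Sigma[symmetric]) auto
  finally show ?thesis .
qed

lemma fact_add_eq_fact_mult_prod:
  assumes "j \<le> n"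
  shows "(fact (m + n) :: 'a::{comm_semiring_1,semiring_char_0}) = fact (m + j) * (\<Prod>t\<in>{j..<n}. of_nat (m + t + 1))"
  using assms
proof (induction n)
  case (Suc n)
  then show ?case
    by (cases "j = Suc n") (simp_all add: prod.atLeastLessThan_Suc algebra_simps)
qed simp

lemma poly_mult_prod_diff_roots:
  fixes p :: "'a::field poly"
  assumes "finite S" "degree p \<le> card S" "\<And>x. x \<in> S \<Longrightarrow> poly p x = 0" "z \<notin> S"
  shows "poly p y * (\<Prod>x\<in>S. z - x) = poly p z * (\<Prod>x\<in>S. y - x)"
proof -
  have nonzero: "(\<Prod>x\<in>S. z - x) \<noteq> 0"
    using assms by auto
  define q where "q = smult (poly p z / (\<Prod>x\<in>S. z - x)) (\<Prod>x\<in>S. [:- x, 1:])"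
  have "p = q"
  proof (rule poly_eqI_degree[of "insert z S"])
    show "poly p x = poly q x" if "x \<in> insert z S" for x
      using that assms nonzero by (auto simp: q_def poly_prod)
    have "degree q \<le> card S"
      unfolding q_def using assms(1)
      by (intro order.trans[OF degree_smult_le] order.trans[OF degree_prod_sum_le]) auto
    then show "degree p < card (insert z S)" "degree q < card (insert z S)"
      using assms by auto
  qed
  then have "poly p y = poly q y"
    by (rule arg_cong)
  also have "\<dots> = poly p z / (\<Prod>x\<in>S. z - x) * (\<Prod>x\<in>S. y - x)"
    by (simp add: q_def poly_prod)
  finally show ?thesis
    using nonzero by (simp add: field_simps)
qed

lemma det_mat_scaled:
  fixes M :: "nat \<Rightarrow> nat \<Rightarrow> 'a::comm_ring_1"
  shows "det (mat n n (\<lambda>(i,j). r i * c j * M i j)) =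
         (\<Prod>i<n. r i) * (\<Prod>j<n. c j) * det (mat n n (\<lambda>(i,j). M i j))"
proof -
  have "det (mat n n (\<lambda>(i,j). r i * c j * M i j)) =
    (\<Sum>p\<in>{p. p permutes {0..<n}}. signof p * (\<Prod>i=0..<n. r i * c (p i) * M i (p i)))"
    by (subst det_def'[of _ n]) auto
  also have "\<dots> = (\<Sum>p\<in>{p. p permutes {0..<n}}.
      (\<Prod>i<n. r i) * (\<Prod>j<n. c j) * (signof p * (\<Prod>i=0..<n. M i (p i))))"
  proof (rule sum.cong[OF refl])
    fix p assume "p \<in> {p. p permutes {0..<n}}"
    then have "(\<Prod>i=0..<n. c (p i)) = (\<Prod>j=0..<n. c j)"
      using prod.permute[of p "{0..<n}" c] by (simp add: comp_def)
    then show "signof p * (\<Prod>i=0..<n. r i * c (p i) * M i (p i)) =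
      (\<Prod>i<n. r i) * (\<Prod>j<n. c j) * (signof p * (\<Prod>i=0..<n. M i (p i)))"
      by (simp add: prod.distrib atLeast0LessThan)
  qed
  also have "\<dots> = (\<Prod>i<n. r i) * (\<Prod>j<n. c j) * det (mat n n (\<lambda>(i,j). M i j))"
    by (subst det_def'[of _ n]) (auto simp: sum_distrib_left)
  finally show ?thesis .
qed

text \<open>Adding multiples of earlier columns is right multiplication by a unitriangular matrix.\<close>

lemma det_mat_add_earlier_columns:
  fixes N :: "nat \<Rightarrow> nat \<Rightarrow> 'a::comm_ring_1"
  shows "det (mat n n (\<lambda>(i,j). N i j + (\<Sum>s<j. w j s * N i s))) = det (mat n n (\<lambda>(i,j). N i j))"
proof -
  define U where "U = mat n n (\<lambda>(s,j). if s = j then 1 else if s < j then w j s else (0::'a))"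
  have U: "U \<in> carrier_mat n n" unfolding U_def by auto
  have det_U: "det U = 1"
    by (subst det_upper_triangular[OF _ U]) (auto simp: U_def upper_triangular_def prod_list_diag_prod)
  have "mat n n (\<lambda>(i,j). N i j + (\<Sum>s<j. w j s * N i s)) = mat n n (\<lambda>(i,j). N i j) * U"
  proof (rule eq_matI)
    fix i j assume "i < dim_row (mat n n (\<lambda>(i,j). N i j) * U)" "j < dim_col (mat n n (\<lambda>(i,j). N i j) * U)"
    then have i: "i < n" and j: "j < n" using U by auto
    have split: "{..<n} = {..<j} \<union> {j} \<union> {Suc j..<n}" using j by auto
    have "(mat n n (\<lambda>(i,j). N i j) * U) $$ (i,j) = (\<Sum>s<n. N i s * U $$ (s,j))"
      using i j U by (simp add: scalar_prod_def atLeast0LessThan)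
    also have "\<dots> = (\<Sum>s<n. if s = j then N i j else if s < j then w j s * N i s else 0)"
      using j by (intro sum.cong) (auto simp: U_def)
    also have "\<dots> = N i j + (\<Sum>s<j. w j s * N i s)"
      unfolding split by (simp add: sum.union_disjoint sum.If_cases Int_absorb1 subset_eq flip: lessThan_def)
    finally show "mat n n (\<lambda>(i,j). N i j + (\<Sum>s<j. w j s * N i s)) $$ (i,j) =
        (mat n n (\<lambda>(i,j). N i j) * U) $$ (i,j)"
      using i j by simp
  qed (use U in auto)
  then show ?thesis by (simp add: det_mult[of _ n] U det_U)
qed

section \<open>Krattenthaler's determinant\<close>

definition krattenthaler_mat ::
  "nat \<Rightarrow> 'a::comm_ring_1 \<Rightarrow> 'a \<Rightarrow> (nat \<Rightarrow> 'a) \<Rightarrow> (nat \<Rightarrow> 'a) \<Rightarrow> (nat \<Rightarrow> 'a) \<Rightarrow> 'a mat" where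
  "krattenthaler_mat n a b X A B =
     mat n n (\<lambda>(i,j). (\<Prod>t\<in>{1..j}. a * X i + A t) * (\<Prod>t\<in>{Suc j..<n}. b * X i + B t))"

lemma krattenthaler_mat_carrier [simp]: "krattenthaler_mat n a b X A B \<in> carrier_mat n n"
  by (simp add: krattenthaler_mat_def)

lemma det_krattenthaler_mat_eq_0:
  assumes "i < j" "j < n" "X i = X j"
  shows "det (krattenthaler_mat n a b X A B) = 0"
proof (rule det_identical_rows[of _ n i j])
  show "row (krattenthaler_mat n a b X A B) i = row (krattenthaler_mat n a b X A B) j"
    by (rule eq_vecI) (use assms in \<open>auto simp: krattenthaler_mat_def\<close>)
qed (use assms in auto)

text \<open>The cofactors along the first row do not involve \<open>X 0\<close>.\<close>

lemma det_krattenthaler_mat_poly: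
  fixes a b :: "'a::idom"
  obtains P where "degree P \<le> n"
    and "\<And>y. poly P y = det (krattenthaler_mat (Suc n) a b (X(0 := y)) A B)"
proof
  let ?M = "\<lambda>y. krattenthaler_mat (Suc n) a b (X(0 := y)) A B"
  define cof where "cof j = cofactor (krattenthaler_mat (Suc n) a b X A B) 0 j" for j
  define P where "P = (\<Sum>j<Suc n. smult (cof j)
      ((\<Prod>t\<in>{1..j}. [:A t, a:]) * (\<Prod>t\<in>{Suc j..<Suc n}. [:B t, b:])))"
  have "cofactor (?M y) 0 j = cof j" for y j
  proof -
    have "mat_delete (?M y) 0 j = mat_delete (krattenthaler_mat (Suc n) a b X A B) 0 j"
      unfolding mat_delete_def krattenthaler_mat_def by (rule eq_matI) auto
    then show ?thesis unfolding cofactor_def cof_def by simp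
  qed
  then have "det (?M y) = (\<Sum>j<Suc n. ?M y $$ (0,j) * cof j)" for y
    by (simp add: laplace_expansion_row[of _ "Suc n" 0])
  then show "poly P y = det (?M y)" for y
    by (simp add: P_def krattenthaler_mat_def poly_sum poly_prod algebra_simps)
  have degree_prod_linear: "degree (\<Prod>t\<in>T. [:c t, d t:]) \<le> card T"
    if "finite T" for T and c d :: "nat \<Rightarrow> 'a"
    using that by (intro order.trans[OF degree_prod_sum_le]) (auto intro: order.trans[OF sum_mono[of _ _ "\<lambda>_. 1"]])
  show "degree P \<le> n"
    unfolding P_def
  proof (intro degree_sum_le)
    fix j assume "j \<in> {..<Suc n}"
    then show "degree (smult (cof j) ((\<Prod>t\<in>{1..j}. [:A t, a:]) * (\<Prod>t\<in>{Suc j..<Suc n}. [:B t, b:]))) \<le> n"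
      using degree_prod_linear[where c = A and d = "\<lambda>_. a" and T = "{1..j}"]
        degree_prod_linear[where c = B and d = "\<lambda>_. b" and T = "{Suc j..<Suc n}"]
      by (intro order.trans[OF degree_smult_le] order.trans[OF degree_mult_le]) auto
  qed auto
qed

text \<open>The factor \<open>a * X 0 + A 1\<close> occurs in every entry of the first row but the first one.\<close>

lemma det_krattenthaler_mat_first_root:
  assumes "a * X 0 + A 1 = 0"
  shows "det (krattenthaler_mat (Suc n) a b X A B) =
    (\<Prod>t\<in>{1..n}. b * X 0 + B t) * (\<Prod>i<n. a * X (Suc i) + A 1) *
    det (krattenthaler_mat n a b (X \<circ> Suc) (A \<circ> Suc) (B \<circ> Suc))"
proof -
  let ?M = "krattenthaler_mat (Suc n) a b X A B"
  have row0: "?M $$ (0, Suc j) = 0" if "j < n" for j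
  proof -
    have "(\<Prod>t\<in>{1..Suc j}. a * X 0 + A t) = 0"
      by (rule prod_zero) (use assms in auto)
    with that show ?thesis by (simp add: krattenthaler_mat_def)
  qed
  let ?N = "mat n n (\<lambda>(i,j). (a * X (Suc i) + A 1) * 1 *
      ((\<Prod>t\<in>{1..j}. a * X (Suc i) + A (Suc t)) * (\<Prod>t\<in>{Suc j..<n}. b * X (Suc i) + B (Suc t))))"
  have "det ?M = ?M $$ (0,0) * cofactor ?M 0 0"
    by (simp add: laplace_expansion_row[of _ "Suc n" 0] lessThan_Suc_eq_insert_0 sum.reindex row0)
  moreover have "?M $$ (0,0) = (\<Prod>t\<in>{1..n}. b * X 0 + B t)"
    by (simp add: krattenthaler_mat_def atLeastLessThanSuc_atLeastAtMost)
  moreover have "mat_delete ?M 0 0 = ?N"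
  proof (rule eq_matI)
    fix i j assume "i < dim_row ?N" "j < dim_col ?N"
    then have ij: "i < n" "j < n" by auto
    then have "mat_delete ?M 0 0 $$ (i,j) =
        (\<Prod>t\<in>{1..Suc j}. a * X (Suc i) + A t) * (\<Prod>t\<in>{Suc (Suc j)..<Suc n}. b * X (Suc i) + B t)"
      by (simp add: mat_delete_def krattenthaler_mat_def del: prod.cl_ivl_Suc prod.op_ivl_Suc)
    with ij show "mat_delete ?M 0 0 $$ (i,j) = ?N $$ (i,j)"
      by (simp only: prod_atLeast1_atMost_Suc prod.shift_bounds_Suc_ivl index_mat split mult_1_right mult.assoc)
  qed (auto simp: mat_delete_def krattenthaler_mat_def)
  ultimately show ?thesis
    by (simp add: cofactor_def det_mat_scaled[where c = "\<lambda>_. 1", simplified] krattenthaler_mat_def)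
qed

text \<open>As a polynomial in \<open>X 0\<close> of degree at most \<open>n\<close>, the determinant vanishes at
  \<open>X 1, \<dots>, X n\<close>, so it is determined by its value at a root of \<open>a * X 0 + A 1\<close>.\<close>

lemma det_krattenthaler_mat_Suc_via_root:
  fixes a b y0 :: "'a::field"
  assumes "a * y0 + A 1 = 0" "inj_on X {1..n}" "y0 \<notin> X ` {1..n}"
  shows "det (krattenthaler_mat (Suc n) a b X A B) * (\<Prod>i\<in>{1..n}. y0 - X i) =
    (\<Prod>t\<in>{1..n}. b * y0 + B t) * (\<Prod>i<n. a * X (Suc i) + A 1) *
    det (krattenthaler_mat n a b (X \<circ> Suc) (A \<circ> Suc) (B \<circ> Suc)) * (\<Prod>i\<in>{1..n}. X 0 - X i)"
proof -
  obtain P where P: "degree P \<le> n" "\<And>y. poly P y = det (krattenthaler_mat (Suc n) a b (X(0 := y)) A B)"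
    using det_krattenthaler_mat_poly[of n a b X A B] by metis
  have "poly P (X 0) * (\<Prod>x\<in>X ` {1..n}. y0 - x) = poly P y0 * (\<Prod>x\<in>X ` {1..n}. X 0 - x)"
  proof (rule poly_mult_prod_diff_roots)
    show "degree P \<le> card (X ` {1..n})"
      using P(1) assms(2) by (simp add: card_image)
    show "poly P x = 0" if x: "x \<in> X ` {1..n}" for x
    proof -
      obtain i where "i \<in> {1..n}" "x = X i" using x by blast
      then show ?thesis
        unfolding P(2) by (intro det_krattenthaler_mat_eq_0[of 0 i]) auto
    qed
  qed (use assms(3) in simp_all)
  moreover have "poly P (X 0) = det (krattenthaler_mat (Suc n) a b X A B)"
    using P(2)[of "X 0"] by simp
  moreover have "poly P y0 = (\<Prod>t\<in>{1..n}. b * y0 + B t) * (\<Prod>i<n. a * X (Suc i) + A 1) *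
      det (krattenthaler_mat n a b (X \<circ> Suc) (A \<circ> Suc) (B \<circ> Suc))"
    using det_krattenthaler_mat_first_root[of a "X(0 := y0)"] assms(1) by (simp add: P(2) comp_def)
  ultimately show ?thesis
    using assms(2) by (simp add: prod.reindex)
qed

lemma det_krattenthaler_mat_Suc:
  fixes a b :: "'a::field"
  assumes "a \<noteq> 0" and "\<And>i t. 0 < t \<Longrightarrow> a * X i + A t \<noteq> 0"
  shows "det (krattenthaler_mat (Suc n) a b X A B) =
    (\<Prod>t\<in>{1..n}. X t - X 0) * (\<Prod>t\<in>{1..n}. a * B t - b * A 1) *
    det (krattenthaler_mat n a b (X \<circ> Suc) (A \<circ> Suc) (B \<circ> Suc))"
proof (cases "inj_on X {1..n}")
  case False
  then obtain i j where ij: "i \<in> {1..n}" "j \<in> {1..n}" "i < j" "X i = X j"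
    unfolding inj_on_def by (metis linorder_neqE_nat)
  then have "det (krattenthaler_mat (Suc n) a b X A B) = 0"
    by (intro det_krattenthaler_mat_eq_0[of i j]) auto
  moreover have "det (krattenthaler_mat n a b (X \<circ> Suc) (A \<circ> Suc) (B \<circ> Suc)) = 0"
    using ij by (intro det_krattenthaler_mat_eq_0[of "i - 1" "j - 1"]) auto
  ultimately show ?thesis by simp
next
  case True
  define y0 where "y0 = - A 1 / a"
  have a_y0: "a * y0 + A 1 = 0"
    using assms(1) by (simp add: y0_def)
  have y0_diff: "y0 - X i \<noteq> 0" for i
    using assms(2)[of 1 i] a_y0 by (auto simp: algebra_simps)
  have "(\<Prod>i<n. a * X (Suc i) + A 1) = (\<Prod>i<n. (-a) * (y0 - X (Suc i)))"
    using a_y0 by (intro prod.cong) (auto simp: algebra_simps)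
  also have "\<dots> = (-a) ^ n * (\<Prod>i<n. y0 - X (Suc i))"
    by (simp only: prod.distrib prod_constant card_lessThan)
  also have "(\<Prod>i<n. y0 - X (Suc i)) = (\<Prod>i\<in>{1..n}. y0 - X i)"
    by (simp add: prod.atLeast1_atMost_eq)
  finally have first_column: "(\<Prod>i<n. a * X (Suc i) + A 1) = (-a) ^ n * (\<Prod>i\<in>{1..n}. y0 - X i)" .
  have "(-a) * (b * y0 + B t) * (X 0 - X t) = (X t - X 0) * (a * B t - b * A 1)" for t
    using a_y0 by (simp add: eq_neg_iff_add_eq_0[symmetric] algebra_simps)
  then have "(\<Prod>t\<in>{1..n}. (-a) * (b * y0 + B t) * (X 0 - X t)) =
      (\<Prod>t\<in>{1..n}. X t - X 0) * (\<Prod>t\<in>{1..n}. a * B t - b * A 1)"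
    by (simp only: prod.distrib)
  then have first_row: "(-a) ^ n * (\<Prod>t\<in>{1..n}. b * y0 + B t) * (\<Prod>t\<in>{1..n}. X 0 - X t) =
      (\<Prod>t\<in>{1..n}. X t - X 0) * (\<Prod>t\<in>{1..n}. a * B t - b * A 1)"
    by (simp only: prod.distrib prod_constant card_atLeastAtMost diff_Suc_1)
  have y0_notin: "y0 \<notin> X ` {1..n}"
    using y0_diff by auto
  have "det (krattenthaler_mat (Suc n) a b X A B) * (\<Prod>i\<in>{1..n}. y0 - X i) =
      (-a) ^ n * (\<Prod>t\<in>{1..n}. b * y0 + B t) * (\<Prod>t\<in>{1..n}. X 0 - X t) *
      det (krattenthaler_mat n a b (X \<circ> Suc) (A \<circ> Suc) (B \<circ> Suc)) * (\<Prod>i\<in>{1..n}. y0 - X i)"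
    using det_krattenthaler_mat_Suc_via_root[where A = A and B = B and b = b, OF a_y0 True y0_notin]
    by (simp only: first_column mult_ac)
  then show ?thesis
    unfolding first_row[symmetric] using y0_diff by simp
qed

text \<open>Krattenthaler, Advanced determinant calculus, Lemma 5.\<close>

lemma det_krattenthaler_mat:
  fixes a b :: "'a::field"
  assumes "a \<noteq> 0" and "\<And>i t. 0 < t \<Longrightarrow> a * X i + A t \<noteq> 0"
  shows "det (krattenthaler_mat n a b X A B) = (\<Prod>i<n. \<Prod>j\<in>{i<..<n}. X j - X i) *
     (\<Prod>s<n. \<Prod>t\<in>{1..<n-s}. a * B (s+t) - b * A (Suc s))"
  using assms(2)
proof (induction n arbitrary: X A B)
  case 0
  then show ?case by (simp add: krattenthaler_mat_def)
next
  case (Suc n)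
  have "{1..<Suc n} = {1..n}" by auto
  then have C: "(\<Prod>s<Suc n. \<Prod>t\<in>{1..<Suc n - s}. a * B (s + t) - b * A (Suc s)) =
      (\<Prod>t\<in>{1..n}. a * B t - b * A 1) * (\<Prod>s<n. \<Prod>t\<in>{1..<n - s}. a * B (Suc s + t) - b * A (Suc (Suc s)))"
    unfolding prod.lessThan_Suc_shift by simp
  have "det (krattenthaler_mat (Suc n) a b X A B) =
      (\<Prod>t\<in>{1..n}. X t - X 0) * (\<Prod>t\<in>{1..n}. a * B t - b * A 1) *
      det (krattenthaler_mat n a b (X \<circ> Suc) (A \<circ> Suc) (B \<circ> Suc))"
    using assms(1) Suc.prems by (rule det_krattenthaler_mat_Suc)
  also have "det (krattenthaler_mat n a b (X \<circ> Suc) (A \<circ> Suc) (B \<circ> Suc)) =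
      (\<Prod>i<n. \<Prod>j\<in>{i<..<n}. X (Suc j) - X (Suc i)) *
      (\<Prod>s<n. \<Prod>t\<in>{1..<n - s}. a * B (Suc s + t) - b * A (Suc (Suc s)))"
    using Suc.IH[of "X \<circ> Suc" "A \<circ> Suc" "B \<circ> Suc"] Suc.prems by (simp add: comp_def)
  finally show ?case
    unfolding C prod_upper_pairs_lessThan_Suc by (simp only: mult_ac)
qed

section \<open>Ballot numbers\<close>

text \<open>For \<open>(k - 1) * y \<le> x + 1\<close> this is the number of lattice paths from \<open>(0, 0)\<close> to \<open>(x, y)\<close>
  never passing above the line \<open>x = (k - 1) * y\<close>.\<close>

definition ballot :: "nat \<Rightarrow> nat \<Rightarrow> nat \<Rightarrow> rat" where
  "ballot k x y = (of_nat x + 1 - (of_nat k - 1) * of_nat y) * fact (x + y) / (fact y * fact (x + 1))"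

lemma ballot_Suc_Suc: "ballot k (Suc x) (Suc y) = ballot k x (Suc y) + ballot k (Suc x) y"
proof -
  define F where "F = (fact (x + y + 1) :: rat)"
  have lhs: "ballot k (Suc x) (Suc y) = (of_nat x + 2 - (of_nat k - 1) * (of_nat y + 1)) * (of_nat x + of_nat y + 2) * F /
      ((of_nat y + 1) * fact y * ((of_nat x + 2) * fact (x + 1)))"
    by (simp add: ballot_def F_def algebra_simps)
  have left: "ballot k x (Suc y) = (of_nat x + 1 - (of_nat k - 1) * (of_nat y + 1)) * F /
      ((of_nat y + 1) * fact y * fact (x + 1))"
    by (simp add: ballot_def F_def algebra_simps)
  have down: "ballot k (Suc x) y = (of_nat x + 2 - (of_nat k - 1) * of_nat y) * F /
      (fact y * ((of_nat x + 2) * fact (x + 1)))"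
    by (simp add: ballot_def F_def algebra_simps)
  have "(of_nat x + 2 :: rat) \<noteq> 0" "(of_nat y + 1 :: rat) \<noteq> 0"
    by (simp_all add: add_nonneg_pos)
  then show ?thesis
    unfolding lhs left down by (simp add: divide_simps del: fact_Suc) (simp add: algebra_simps)
qed

lemma ballot_Suc_eq_sum:
  assumes "Suc x0 = (k - 1) * Suc y"
  shows "ballot k (x0 + d) (Suc y) = (\<Sum>s\<in>{Suc x0..x0 + d}. ballot k s y)"
proof (induction d)
  case 0
  from assms have "k \<ge> 1" by (cases k) auto
  with assms have "(of_nat x0 + 1 :: rat) = (of_nat k - 1) * of_nat (Suc y)"
    by (metis of_nat_Suc of_nat_1 of_nat_diff of_nat_mult add.commute)
  then show ?case by (simp add: ballot_def)
next
  case (Suc d)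
  then show ?case
    using ballot_Suc_Suc[of k "x0 + d" y] by simp
qed

lemma gen_catalan_eq_ballot:
  assumes "k \<ge> 2"
  shows "gen_catalan m k = ballot k m (m div (k - 1))"
proof -
  define q where "q = m div (k - 1)"
  have "(k - 1) * q \<le> m"
    by (simp add: q_def)
  with assms have numerator: "(of_nat (m - (k - 1) * q + 1) :: rat) = of_nat m + 1 - (of_nat k - 1) * of_nat q"
    by (simp add: of_nat_diff)
  have "(of_nat ((m + q + 1) choose (m + 1)) :: rat) = fact (m + q + 1) / (fact (m + 1) * fact q)"
    by (subst binomial_fact) auto
  then have binomial: "(of_nat ((m + q + 1) choose (m + 1)) :: rat) =
      of_nat (m + q + 1) * fact (m + q) / (fact (m + 1) * fact q)"
    by simp
  show ?thesis
    unfolding gen_catalan_def Let_def q_def[symmetric] ballot_def numerator binomial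
    by (simp add: field_simps del: of_nat_add of_nat_Suc fact_Suc)
qed

text \<open>The coefficients vanish below \<open>k - 1 \<ge> \<beta>\<close>, so adding such a combination to the column
  with index \<open>c - \<beta>\<close> of the matrix of diagonal ballot numbers only involves earlier columns.\<close>

definition ballot_span :: "nat \<Rightarrow> nat \<Rightarrow> (nat \<Rightarrow> rat) set" where
  "ballot_span k c = {f. \<exists>w. (\<forall>s<k - 1. w s = 0) \<and>
     (\<forall>a. f a = (\<Sum>s<c. w s * ballot k ((k - 1) * a + s) a))}"

lemma ballot_span_zero: "(\<lambda>_. 0) \<in> ballot_span k c"
  unfolding ballot_span_def by (intro CollectI exI[of _ "\<lambda>_. 0"]) simp

lemma ballot_span_add:
  assumes "f \<in> ballot_span k c" "g \<in> ballot_span k c"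
  shows "(\<lambda>a. f a + g a) \<in> ballot_span k c"
proof -
  obtain v w where "\<forall>s<k - 1. v s = 0" "\<forall>a. f a = (\<Sum>s<c. v s * ballot k ((k - 1) * a + s) a)"
    "\<forall>s<k - 1. w s = 0" "\<forall>a. g a = (\<Sum>s<c. w s * ballot k ((k - 1) * a + s) a)"
    using assms unfolding ballot_span_def by blast
  then show ?thesis
    unfolding ballot_span_def
    by (intro CollectI exI[of _ "\<lambda>s. v s + w s"]) (simp add: sum.distrib ring_distribs)
qed

lemma ballot_span_sum:
  "finite S \<Longrightarrow> (\<And>x. x \<in> S \<Longrightarrow> F x \<in> ballot_span k c) \<Longrightarrow> (\<lambda>a. \<Sum>x\<in>S. F x a) \<in> ballot_span k c"
  by (induction S rule: finite_induct) (auto intro: ballot_span_zero ballot_span_add)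

lemma ballot_span_diagonal:
  assumes "k - 1 \<le> s" "s < c"
  shows "(\<lambda>a. ballot k ((k - 1) * a + s) a) \<in> ballot_span k c"
proof -
  have "{..<c} \<inter> {t. t = s} = {s}"
    using assms by auto
  then show ?thesis
    unfolding ballot_span_def using assms
    by (intro CollectI exI[of _ "\<lambda>t. of_bool (t = s)"]) auto
qed

lemma ballot_span_mono:
  assumes "c' \<le> c" "f \<in> ballot_span k c'"
  shows "f \<in> ballot_span k c"
proof -
  obtain w where w: "\<forall>s<k - 1. w s = 0" "\<forall>a. f a = (\<Sum>s<c'. w s * ballot k ((k - 1) * a + s) a)"
    using assms(2) unfolding ballot_span_def by blast
  have "{..<c} \<inter> {s. s < c'} = {..<c'}"
    using assms(1) by auto
  then have "(\<Sum>s<c. of_bool (s < c') * (w s * ballot k ((k - 1) * a + s) a)) =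
      (\<Sum>s<c'. w s * ballot k ((k - 1) * a + s) a)" for a
    by simp
  then show ?thesis
    unfolding ballot_span_def using w
    by (intro CollectI exI[of _ "\<lambda>s. of_bool (s < c') * w s"]) (auto simp: mult.assoc)
qed

lemma ballot_Suc_eq_sum_diagonal:
  assumes "k \<ge> 2" "(k - 1) * Suc d \<le> c"
  shows "ballot k ((k - 1) * a + c) (a + Suc d) =
    (\<Sum>c'\<in>{(k - 1) * Suc d..c}. ballot k ((k - 1) * a + c') (a + d))"
proof -
  define x0 where "x0 = (k - 1) * Suc (a + d) - 1"
  have x0_Suc: "Suc x0 = (k - 1) * Suc (a + d)"
    using assms(1) by (simp add: x0_def)
  also have "\<dots> = (k - 1) * Suc d + (k - 1) * a"
    by (metis distrib_left add_Suc add.commute)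
  finally have x0: "Suc x0 = (k - 1) * Suc d + (k - 1) * a" .
  have "x0 + ((k - 1) * a + c - x0) = c + (k - 1) * a"
    using x0 assms(2) by simp
  moreover have "ballot k (x0 + ((k - 1) * a + c - x0)) (Suc (a + d)) =
      (\<Sum>s\<in>{Suc x0..x0 + ((k - 1) * a + c - x0)}. ballot k s (a + d))"
    using x0_Suc by (rule ballot_Suc_eq_sum)
  ultimately have "ballot k (c + (k - 1) * a) (a + Suc d) =
      (\<Sum>s\<in>{(k - 1) * Suc d + (k - 1) * a..c + (k - 1) * a}. ballot k s (a + d))"
    unfolding x0 by simp
  also have "\<dots> = (\<Sum>c'\<in>{(k - 1) * Suc d..c}. ballot k (c' + (k - 1) * a) (a + d))"
    by (rule sum.shift_bounds_cl_nat_ivl)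
  finally show ?thesis
    by (simp only: add.commute)
qed

text \<open>Summing over the last step of the paths, \<open>ballot k x (a + d + 1)\<close> is a sum of ballot numbers
  at height \<open>a + d\<close>, each of which differs from a diagonal one by an element of a smaller span.\<close>

lemma ballot_shift_in_span:
  assumes "k \<ge> 2" "(k - 1) * d \<le> c"
  shows "(\<lambda>a. ballot k ((k - 1) * a + c) (a + d) - ballot k ((k - 1) * a + c) a) \<in> ballot_span k c"
  using assms(2)
proof (induction d arbitrary: c)
  case 0
  then show ?case using ballot_span_zero by simp
next
  case (Suc d)
  define step where "step c' a = ballot k ((k - 1) * a + c') (a + d)" for c' a
  have IH: "(\<lambda>a. step c' a - ballot k ((k - 1) * a + c') a) \<in> ballot_span k c" if "(k - 1) * d \<le> c'" "c' \<le> c" for c'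
    using Suc.IH[OF that(1)] that(2) unfolding step_def by (rule ballot_span_mono[rotated])
  have "(\<lambda>a. (step c' a - ballot k ((k - 1) * a + c') a) + ballot k ((k - 1) * a + c') a) \<in> ballot_span k c"
    if "c' \<in> {(k - 1) * Suc d..<c}" for c'
    using that assms(1)
    by (intro ballot_span_add IH ballot_span_diagonal) (auto intro: order.trans[of _ "(k - 1) * Suc d"])
  then have "(\<lambda>a. \<Sum>c'\<in>{(k - 1) * Suc d..<c}. step c' a) \<in> ballot_span k c"
    by (intro ballot_span_sum) simp_all
  then have "(\<lambda>a. (\<Sum>c'\<in>{(k - 1) * Suc d..<c}. step c' a) +
      (step c a - ballot k ((k - 1) * a + c) a)) \<in> ballot_span k c"
    using Suc.prems by (intro ballot_span_add IH) simp_all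
  moreover have "ballot k ((k - 1) * a + c) (a + Suc d) = (\<Sum>c'\<in>{(k - 1) * Suc d..<c}. step c' a) + step c a" for a
    unfolding ballot_Suc_eq_sum_diagonal[OF assms(1) Suc.prems] step_def
    using Suc.prems by (simp add: sum.last_plus)
  ultimately show ?case
    by (simp add: add_diff_eq)
qed

lemma gen_catalan_in_diagonal_span:
  assumes "k \<ge> 2"
  shows "\<exists>w. (\<forall>s<k - 1. w s = 0) \<and> (\<forall>a. gen_catalan ((k - 1) * a + c) k =
    ballot k ((k - 1) * a + c) a + (\<Sum>s<c. w s * ballot k ((k - 1) * a + s) a))"
proof -
  have "(k - 1) * (c div (k - 1)) \<le> c"
    by (rule times_div_less_eq_dividend)
  then have "(\<lambda>a. ballot k ((k - 1) * a + c) (a + c div (k - 1)) - ballot k ((k - 1) * a + c) a)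
      \<in> ballot_span k c"
    by (rule ballot_shift_in_span[OF assms])
  then obtain w where w: "\<forall>s<k - 1. w s = 0" "\<forall>a. ballot k ((k - 1) * a + c) (a + c div (k - 1)) -
      ballot k ((k - 1) * a + c) a = (\<Sum>s<c. w s * ballot k ((k - 1) * a + s) a)"
    unfolding ballot_span_def by blast
  have "k - 1 \<noteq> 0"
    using assms by simp
  then have "gen_catalan ((k - 1) * a + c) k = ballot k ((k - 1) * a + c) (a + c div (k - 1))" for a
    by (simp add: gen_catalan_eq_ballot[OF assms])
  then show ?thesis
    using w by (intro exI[of _ w]) (simp add: diff_eq_eq add.commute)
qed

lemma det_gen_catalan_mat_eq_det_ballot_mat:
  assumes "k \<ge> 2" "\<beta> \<le> k - 1"
  shows "det (mat n n (\<lambda>(i, j). gen_catalan ((k - 1) * \<alpha> i + j + \<beta>) k)) =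
    det (mat n n (\<lambda>(i, j). ballot k ((k - 1) * \<alpha> i + (\<beta> + j)) (\<alpha> i)))"
proof -
  have "\<forall>c. \<exists>w. (\<forall>s<k - 1. w s = 0) \<and> (\<forall>a. gen_catalan ((k - 1) * a + c) k =
      ballot k ((k - 1) * a + c) a + (\<Sum>s<c. w s * ballot k ((k - 1) * a + s) a))"
    by (rule allI gen_catalan_in_diagonal_span[OF assms(1)])+
  from choice[OF this] obtain W where "\<forall>c. (\<forall>s<k - 1. W c s = 0) \<and> (\<forall>a. gen_catalan ((k - 1) * a + c) k =
      ballot k ((k - 1) * a + c) a + (\<Sum>s<c. W c s * ballot k ((k - 1) * a + s) a))" ..
  then have W: "\<And>c s. s < k - 1 \<Longrightarrow> W c s = 0"
    "\<And>c a. gen_catalan ((k - 1) * a + c) k =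
      ballot k ((k - 1) * a + c) a + (\<Sum>s<c. W c s * ballot k ((k - 1) * a + s) a)"
    by simp_all
  define N where "N i j = ballot k ((k - 1) * \<alpha> i + (\<beta> + j)) (\<alpha> i)" for i j
  have entry: "gen_catalan ((k - 1) * \<alpha> i + j + \<beta>) k = N i j + (\<Sum>s<j. W (\<beta> + j) (\<beta> + s) * N i s)"
    for i j
  proof -
    have "W (\<beta> + j) s = 0" if "s < \<beta>" for s
      using W(1) assms(2) that by simp
    then have "(\<Sum>s<\<beta> + j. W (\<beta> + j) s * ballot k ((k - 1) * \<alpha> i + s) (\<alpha> i)) =
        (\<Sum>s<j. W (\<beta> + j) (\<beta> + s) * N i s)"
      by (simp add: sum_lessThan_add N_def)
    moreover have "(k - 1) * \<alpha> i + j + \<beta> = (k - 1) * \<alpha> i + (\<beta> + j)"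
      by simp
    ultimately show ?thesis
      unfolding N_def by (simp only: W(2))
  qed
  show ?thesis
    unfolding entry det_mat_add_earlier_columns N_def ..
qed

lemma ballot_diagonal_factorization:
  assumes "k \<ge> 1" "j < n"
  shows "ballot k ((k - 1) * a + (\<beta> + j)) a =
    fact (k * a + \<beta>) / (fact a * fact ((k - 1) * a + \<beta> + n)) * (of_nat (\<beta> + j) + 1) *
    ((\<Prod>t\<in>{1..j}. of_nat k * of_nat a + (of_nat \<beta> + of_nat t)) *
     (\<Prod>t\<in>{Suc j..<n}. (of_nat k - 1) * of_nat a + (of_nat \<beta> + of_nat t + 1)))"
proof -
  define P1 where "P1 = (\<Prod>t\<in>{1..j}. of_nat k * of_nat a + (of_nat \<beta> + of_nat t) :: rat)"
  define P2 where "P2 = (\<Prod>t\<in>{Suc j..<n}. (of_nat k - 1) * of_nat a + (of_nat \<beta> + of_nat t + 1) :: rat)"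
  have of_nat_k_minus_1: "(of_nat ((k - 1) * a) :: rat) = (of_nat k - 1) * of_nat a"
    using assms(1) by (simp add: of_nat_diff)
  have "(k - 1) * a + (\<beta> + j) + a = k * a + \<beta> + j"
    using assms(1) by (cases k) simp_all
  moreover have "(fact (k * a + \<beta> + j) :: rat) = fact (k * a + \<beta>) * P1"
  proof -
    have "(fact (k * a + \<beta> + j) :: rat) = fact (k * a + \<beta> + 0) * (\<Prod>t\<in>{0..<j}. of_nat (k * a + \<beta> + t + 1))"
      by (rule fact_add_eq_fact_mult_prod) simp
    also have "(\<Prod>t\<in>{0..<j}. of_nat (k * a + \<beta> + t + 1)) = P1"
      by (simp add: P1_def prod.atLeast1_atMost_eq atLeast0LessThan add_ac)
    finally show ?thesis by simp
  qed
  ultimately have fact_numerator: "(fact ((k - 1) * a + (\<beta> + j) + a) :: rat) = fact (k * a + \<beta>) * P1"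
    by (simp only:)
  have "(fact ((k - 1) * a + \<beta> + n) :: rat) =
      fact ((k - 1) * a + \<beta> + Suc j) * (\<Prod>t\<in>{Suc j..<n}. of_nat ((k - 1) * a + \<beta> + t + 1))"
    using assms(2) by (intro fact_add_eq_fact_mult_prod) simp
  also have "(\<Prod>t\<in>{Suc j..<n}. of_nat ((k - 1) * a + \<beta> + t + 1)) = P2"
    unfolding P2_def using of_nat_k_minus_1 by (intro prod.cong) simp_all
  finally have fact_denominator: "(fact ((k - 1) * a + \<beta> + n) :: rat) = fact ((k - 1) * a + (\<beta> + j) + 1) * P2"
    by (simp add: add.assoc del: fact_Suc)
  have "P2 \<noteq> 0"
    unfolding P2_def using assms(1) by (intro prod_pos less_imp_neq[symmetric]) (simp add: add_nonneg_pos)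
  moreover have "(of_nat ((k - 1) * a + (\<beta> + j)) + 1 - (of_nat k - 1) * of_nat a :: rat) = of_nat (\<beta> + j) + 1"
    using of_nat_k_minus_1 by simp
  moreover have "B * (F * P1) / (Fa * Fx) = F / (Fa * (Fx * P2)) * B * (P1 * P2)"
    if "P2 \<noteq> 0" "Fa \<noteq> 0" "Fx \<noteq> 0" for B F Fa Fx :: rat
    using that by (simp add: field_simps)
  ultimately show ?thesis
    unfolding ballot_def fact_numerator fact_denominator P1_def[symmetric] P2_def[symmetric] by simp
qed

lemma prod_triangle_eq_fact_quotients:
  assumes "k \<ge> 1"
  shows "(\<Prod>s<n. \<Prod>t<n - s. of_nat (\<beta> + s + 1 + k * t) :: rat) =
    (\<Prod>i<n. fact ((k - 1) * i + \<beta> + n) / fact (k * i + \<beta>))"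
proof -
  have "(fact ((k - 1) * i + \<beta> + n) :: rat) =
      fact (k * i + \<beta>) * (\<Prod>s<n - i. of_nat (\<beta> + s + 1 + k * i))" if "i < n" for i
  proof -
    have "(k - 1) * i + i = k * i"
      using assms by (cases k) simp_all
    with that have "(k - 1) * i + \<beta> + n = k * i + \<beta> + (n - i)"
      by simp
    moreover have "(fact (k * i + \<beta> + (n - i)) :: rat) =
        fact (k * i + \<beta> + 0) * (\<Prod>s\<in>{0..<n - i}. of_nat (k * i + \<beta> + s + 1))"
      by (rule fact_add_eq_fact_mult_prod) simp
    ultimately show ?thesis
      by (simp add: atLeast0LessThan add_ac)
  qed
  then have "(\<Prod>t<n. \<Prod>s<n - t. of_nat (\<beta> + s + 1 + k * t) :: rat) =
      (\<Prod>i<n. fact ((k - 1) * i + \<beta> + n) / fact (k * i + \<beta>))"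
    by (intro prod.cong) simp_all
  then show ?thesis
    by (subst prod_lessThan_triangle_swap)
qed

lemma det_krattenthaler_mat_ballot:
  assumes "k \<ge> 1"
  shows "det (krattenthaler_mat n (of_nat k) (of_nat k - 1) (\<lambda>i. of_nat (\<alpha> i))
      (\<lambda>t. of_nat \<beta> + of_nat t) (\<lambda>t. of_nat \<beta> + of_nat t + 1)) =
    (\<Prod>i<n. \<Prod>j\<in>{i<..<n}. of_nat (\<alpha> j) - of_nat (\<alpha> i)) *
    (\<Prod>s<n. \<Prod>t\<in>{1..<n - s}. of_nat (\<beta> + s + 1 + k * t) :: rat)"
proof -
  have nonzero: "of_nat k * of_nat (\<alpha> i) + (of_nat \<beta> + of_nat t) \<noteq> (0 :: rat)" if "0 < t" for i t
  proof -
    have "of_nat k * of_nat (\<alpha> i) + (of_nat \<beta> + of_nat t) = (of_nat (k * \<alpha> i + \<beta> + t) :: rat)"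
      by simp
    with that show ?thesis
      by (simp only: of_nat_eq_0_iff)
  qed
  have "(of_nat k * (of_nat \<beta> + of_nat (s + t) + 1) - (of_nat k - 1) * (of_nat \<beta> + of_nat (Suc s)) :: rat) =
      of_nat (\<beta> + s + 1 + k * t)" for s t
    by (simp add: algebra_simps)
  then show ?thesis
    using assms by (subst det_krattenthaler_mat) (simp_all add: nonzero)
qed

lemma det_ballot_mat:
  assumes "k \<ge> 2"
  shows "det (mat n n (\<lambda>(i, j). ballot k ((k - 1) * \<alpha> i + (\<beta> + j)) (\<alpha> i))) =
    (\<Prod>i<n. fact (k * \<alpha> i + \<beta>) / (fact (\<alpha> i) * fact ((k - 1) * \<alpha> i + \<beta> + n))) *
    (\<Prod>i<n. \<Prod>j\<in>{i<..<n}. of_nat (\<alpha> j) - of_nat (\<alpha> i)) *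
    (\<Prod>i<n. fact ((k - 1) * i + \<beta> + n) / fact (k * i + \<beta>))"
proof -
  define g where "g i = (fact (k * \<alpha> i + \<beta>) / (fact (\<alpha> i) * fact ((k - 1) * \<alpha> i + \<beta> + n)) :: rat)"
    for i
  define h where "h j = of_nat (\<beta> + j) + (1 :: rat)" for j
  define K where "K = krattenthaler_mat n (of_nat k) (of_nat k - 1) (\<lambda>i. of_nat (\<alpha> i))
    (\<lambda>t. of_nat \<beta> + of_nat t) (\<lambda>t. of_nat \<beta> + of_nat t + (1 :: rat))"
  have "ballot k ((k - 1) * \<alpha> i + (\<beta> + j)) (\<alpha> i) = g i * h j * K $$ (i, j)" if "i < n" "j < n" for i j
    using ballot_diagonal_factorization[of k j n "\<alpha> i" \<beta>] assms that
    by (simp add: g_def h_def K_def krattenthaler_mat_def)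
  then have entries: "mat n n (\<lambda>(i, j). ballot k ((k - 1) * \<alpha> i + (\<beta> + j)) (\<alpha> i)) =
      mat n n (\<lambda>(i, j). g i * h j * K $$ (i, j))"
    by (intro eq_matI) simp_all
  have "mat n n (\<lambda>(i, j). K $$ (i, j)) = K"
    by (intro eq_matI) (simp_all add: K_def krattenthaler_mat_def)
  then have "det (mat n n (\<lambda>(i, j). ballot k ((k - 1) * \<alpha> i + (\<beta> + j)) (\<alpha> i))) =
      (\<Prod>i<n. g i) * (\<Prod>j<n. h j) * det K"
    unfolding entries using det_mat_scaled[of n g h "\<lambda>i j. K $$ (i, j)"] by simp
  also have "\<dots> = (\<Prod>i<n. g i) * (\<Prod>i<n. \<Prod>j\<in>{i<..<n}. of_nat (\<alpha> j) - of_nat (\<alpha> i)) *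
      ((\<Prod>j<n. h j) * (\<Prod>s<n. \<Prod>t\<in>{1..<n - s}. of_nat (\<beta> + s + 1 + k * t)))"
    using assms by (simp add: K_def det_krattenthaler_mat_ballot mult_ac)
  also have "(\<Prod>j<n. h j) * (\<Prod>s<n. \<Prod>t\<in>{1..<n - s}. of_nat (\<beta> + s + 1 + k * t)) =
      (\<Prod>s<n. \<Prod>t<n - s. of_nat (\<beta> + s + 1 + k * t) :: rat)"
  proof -
    have "{..<n - s} = insert 0 {1..<n - s}" if "s < n" for s
      using that by auto
    then show ?thesis
      by (simp add: h_def prod.distrib[symmetric] add_ac)
  qed
  also have "\<dots> = (\<Prod>i<n. fact ((k - 1) * i + \<beta> + n) / fact (k * i + \<beta>))"
    using assms by (intro prod_triangle_eq_fact_quotients) simp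
  finally show ?thesis
    by (simp add: g_def)
qed

theorem theorem6:
  fixes n k \<beta> :: nat and \<alpha> :: "nat \<Rightarrow> nat"
  assumes "n \<ge> 1" and "k \<ge> 2" and "\<beta> \<le> k - 1"
  shows "det (mat n n (\<lambda>(i, j). gen_catalan ((k - 1) * \<alpha> i + j + \<beta>) k)) =
    (\<Prod>i<n. \<Prod>j\<in>{i<..<n}. (of_nat (\<alpha> j) - of_nat (\<alpha> i) :: rat)) *
    (\<Prod>i<n. (of_nat (fact ((k - 1) * i + \<beta> + n)) * of_nat (fact (k * \<alpha> i + \<beta>)))
           / (of_nat (fact (k * i + \<beta>)) * of_nat (fact (\<alpha> i))
              * of_nat (fact ((k - 1) * \<alpha> i + \<beta> + n))))"
proof -
  have "det (mat n n (\<lambda>(i, j). gen_catalan ((k - 1) * \<alpha> i + j + \<beta>) k)) =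
      det (mat n n (\<lambda>(i, j). ballot k ((k - 1) * \<alpha> i + (\<beta> + j)) (\<alpha> i)))"
    using assms(2,3) by (rule det_gen_catalan_mat_eq_det_ballot_mat)
  also have "\<dots> = (\<Prod>i<n. fact (k * \<alpha> i + \<beta>) / (fact (\<alpha> i) * fact ((k - 1) * \<alpha> i + \<beta> + n))) *
      (\<Prod>i<n. \<Prod>j\<in>{i<..<n}. of_nat (\<alpha> j) - of_nat (\<alpha> i)) *
      (\<Prod>i<n. fact ((k - 1) * i + \<beta> + n) / fact (k * i + \<beta>))"
    using assms(2) by (rule det_ballot_mat)
  also have "\<dots> = (\<Prod>i<n. \<Prod>j\<in>{i<..<n}. of_nat (\<alpha> j) - of_nat (\<alpha> i)) *
      (\<Prod>i<n. fact (k * \<alpha> i + \<beta>) / (fact (\<alpha> i) * fact ((k - 1) * \<alpha> i + \<beta> + n)) *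
        (fact ((k - 1) * i + \<beta> + n) / fact (k * i + \<beta>)))"
    by (simp only: prod.distrib mult_ac)
  also have "(\<Prod>i<n. fact (k * \<alpha> i + \<beta>) / (fact (\<alpha> i) * fact ((k - 1) * \<alpha> i + \<beta> + n)) *
        (fact ((k - 1) * i + \<beta> + n) / fact (k * i + \<beta>))) =
      (\<Prod>i<n. (of_nat (fact ((k - 1) * i + \<beta> + n)) * of_nat (fact (k * \<alpha> i + \<beta>)))
           / (of_nat (fact (k * i + \<beta>)) * of_nat (fact (\<alpha> i))
              * of_nat (fact ((k - 1) * \<alpha> i + \<beta> + n))) :: rat)"
    by (intro prod.cong) (simp_all add: field_simps)
  finally show ?thesis .
qed

end
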